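(* Consider the stochastic bipartite matching model described in the context, under the stability condition, with stationary distribution $\pi$. For $\mathcal{A}\in\mathcal{J}_0$ define $\ell_{\mathcal{I}}(\mathcal{A})=\sum_{(c,d)\in\Pi_{\mathcal{A}}}|c|\,\pi(c,d)$ (so that $\ell_{\mathcal{I}}(\mathcal{A})/\pi(\mathcal{A})$ is the stationary mean number of unmatched customers given that the set of unmatched classes is $\mathcal{A}$), with the convention $\ell_{\mathcal{I}}(\mathcal{A})=0$ if $\mathcal{A}\notin\mathcal{J}_0$. Then the stationary mean number of unmatched customers is $L_{\mathcal{I}}=\sum_{\mathcal{A}\in\mathcal{J}_0}\ell_{\mathcal{I}}(\mathcal{A})$, $\ell_{\mathcal{I}}(\emptyset)=0$, and for each $\mathcal{A}\in\mathcal{J}$, \[ \begin{aligned} \Delta(\mathcal{A})\,\ell_{\mathcal{I}}(\mathcal{A}) ={}& \mu(\mathcal{K}(\mathcal{A}\cap\mathcal{I}))\,\lambda(\mathcal{I}(\mathcal{A}\cap\mathcal{K}))\,\pi(\mathcal{A}) + \mu(\mathcal{A}\cap\mathcal{K})\sum_{i\in\mathcal{A}\cap\mathcal{I}}\lambda_i\,\ell_{\mathcal{I}}(\mathcal{A}\setminus\{i\})\\ &+\lambda(\mathcal{A}\cap\mathcal{I})\sum_{k\in\mathcal{A}\cap\mathcal{K}}\mu_k\,\ell_{\mathcal{I}}(\mathcal{A}\setminus\{k\}) + \sum_{i\in\mathcal{A}\cap\mathcal{I}}\sum_{k\in\mathcal{A}\cap\mathcal{K}}\lambda_i\mu_k\,\ell_{\mathcal{I}}(\mathcal{A}\setminus\{i,k\}).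 \end{aligned} \]
   Context: Let $\mathcal{I}$ (customer classes) and $\mathcal{K}$ (server classes) be disjoint finite non-empty sets, and consider a connected bipartite graph (the compatibility graph) on $\mathcal{I}\cup\mathcal{K}$ whose edges all join an element of $\mathcal{I}$ to an element of $\mathcal{K}$; write $i\sim k$ if $i\in\mathcal{I}$ and $k\in\mathcal{K}$ are adjacent and $i\nsim k$ otherwise. For $i\in\mathcal{I}$ let $\mathcal{K}_i=\{k\in\mathcal{K}: i\sim k\}$ and for $k\in\mathcal{K}$ let $\mathcal{I}_k=\{i\in\mathcal{I}: i\sim k\}$. Let $\lambda_i>0$ ($i\in\mathcal{I}$) and $\mu_k>0$ ($k\in\mathcal{K}$) with $\sum_i\lambda_i=\sum_k\mu_k=1$. For $\mathcal{A}\subseteq\mathcal{I}$ write $\lambda(\mathcal{A})=\sum_{i\in\mathcal{A}}\lambda_i$ and $\mathcal{K}(\mathcal{A})=\bigcup_{i\in\mathcal{A}}\mathcal{K}_i$; for $\mathcal{A}\subseteq\mathcal{K}$ write $\mu(\mathcal{A})=\sum_{k\in\mathcal{A}}\mu_k$ and $\mathcal{I}(\mathcal{A})=\bigcup_{k\in\mathcal{A}}\mathcal{I}_k$. Model: time is slotted; in each slot exactly one customer and one server arrive, the customer being of class $i$ with probability $\lambda_i$ and the server of class $k$ with probability $\mu_k$, independently within and across slots. Unmatched customers and unmatched servers wait in two queues in arrival order. Upon each arrival (first-come-first-matched policy): (1) the incoming customer is matched with the longest-waiting compatible unmatched server, if any; (2) the incoming server is matched with the longest-waiting compatible unmatched customer,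 if any; (3) if neither can be matched with a waiting item, they are matched with each other if compatible; (4) any incoming item still unmatched is appended to the back of its queue. Matched items leave immediately. The state is $(c,d)$ with $c=(c_1,\dots,c_n)$ the classes of unmatched customers and $d=(d_1,\dots,d_n)$ the classes of unmatched servers, in arrival order (the two lengths are always equal); the state space is $\Pi=\bigcup_{n\ge0}\{(c,d)\in\mathcal{I}^n\times\mathcal{K}^n: c_p\nsim d_q\ \forall p,q\}$, and $\varnothing$ denotes the empty state. For a sequence $c$, $|c|$ denotes its length. Stability condition (assumed): $\lambda(\mathcal{A})<\mu(\mathcal{K}(\mathcal{A}))$ for every non-empty $\mathcal{A}\subsetneq\mathcal{I}$ (equivalently $\mu(\mathcal{A})<\lambda(\mathcal{I}(\mathcal{A}))$ for every non-empty $\mathcal{A}\subsetneq\mathcal{K}$). Then the Markov chain of states is ergodic with stationary distribution $\pi(c,d)=\pi(\varnothing)\prod_{p=1}^n \frac{\lambda_{c_p}}{\mu(\mathcal{K}(\{c_1,\dots,c_p\}))}\frac{\mu_{d_p}}{\lambda(\mathcal{I}(\{d_1,\dots,d_p\}))}$, $(c,d)\in\Pi$. Let $\mathcal{J}$ be the family of independent sets $\mathcal{A}\subseteq\mathcal{I}\cup\mathcal{K}$ of the compatibility graph such that $\mathcal{A}\cap\mathcal{I}$ and $\mathcal{A}\cap\mathcal{K}$ are both non-empty, and $\mathcal{J}_0=\mathcal{J}\cup\{\emptyset\}$. For $\mathcal{A}\in\mathcal{J}_0$, let $\Pi_{\mathcal{A}}$ be the set of $(c,d)\in\Pi$ with $\{c_1,\dots,c_n\}=\mathcal{A}\cap\mathcal{I}$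 and $\{d_1,\dots,d_n\}=\mathcal{A}\cap\mathcal{K}$, and $\pi(\mathcal{A})=\sum_{(c,d)\in\Pi_{\mathcal{A}}}\pi(c,d)$; by convention $\pi(\mathcal{A})=0$ if $\mathcal{A}\notin\mathcal{J}_0$. For $\mathcal{A}\in\mathcal{J}$, $\Delta(\mathcal{A})=\mu(\mathcal{K}(\mathcal{A}\cap\mathcal{I}))\,\lambda(\mathcal{I}(\mathcal{A}\cap\mathcal{K}))-\lambda(\mathcal{A}\cap\mathcal{I})\,\mu(\mathcal{A}\cap\mathcal{K})$. *)

theory Defs
  imports "HOL-Analysis.Analysis"
begin

text \<open>Customer classes I and server classes K are disjoint finite subsets of one
type 'a. The compatibility graph is given by E: E i k means i \<in> I and k \<in> K are adjacent.
lam and mu are the arrival probabilities (only their values on I, resp. K, matter).\<close>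

definition Kof :: "('a \<Rightarrow> 'a \<Rightarrow> bool) \<Rightarrow> 'a set \<Rightarrow> 'a set \<Rightarrow> 'a set" where
  "Kof E K A = {k \<in> K. \<exists>i\<in>A. E i k}"

definition Iof :: "('a \<Rightarrow> 'a \<Rightarrow> bool) \<Rightarrow> 'a set \<Rightarrow> 'a set \<Rightarrow> 'a set" where
  "Iof E I B = {i \<in> I. \<exists>k\<in>B. E i k}"

definition states :: "'a set \<Rightarrow> 'a set \<Rightarrow> ('a \<Rightarrow> 'a \<Rightarrow> bool) \<Rightarrow> ('a list \<times> 'a list) set" where
  "states I K E = {(c, d). length c = length d \<and> set c \<subseteq> I \<and> set d \<subseteq> K \<and>
      (\<forall>p\<in>set c. \<forall>q\<in>set d. \<not> E p q)}"

definition pi_un :: "'a set \<Rightarrow> 'a set \<Rightarrow> ('a \<Rightarrow> 'a \<Rightarrow> bool) \<Rightarrow> ('a \<Rightarrow> real) \<Rightarrow> ('a \<Rightarrow> real)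
    \<Rightarrow> 'a list \<times> 'a list \<Rightarrow> real" where
  "pi_un I K E lam mu s = (case s of (c, d) \<Rightarrow>
     (\<Prod>p<length c. lam (c ! p) / sum mu (Kof E K (set (take (Suc p) c)))
                  * (mu (d ! p) / sum lam (Iof E I (set (take (Suc p) d))))))"

definition pi_st :: "'a set \<Rightarrow> 'a set \<Rightarrow> ('a \<Rightarrow> 'a \<Rightarrow> bool) \<Rightarrow> ('a \<Rightarrow> real) \<Rightarrow> ('a \<Rightarrow> real)
    \<Rightarrow> 'a list \<times> 'a list \<Rightarrow> real" where
  "pi_st I K E lam mu s =
     pi_un I K E lam mu s / (\<Sum>\<^sub>\<infinity> t\<in>states I K E. pi_un I K E lam mu t)"

definition Jfam :: "'a set \<Rightarrow> 'a set \<Rightarrow> ('a \<Rightarrow> 'a \<Rightarrow> bool) \<Rightarrow> 'a set set" where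
  "Jfam I K E = {A. A \<subseteq> I \<union> K \<and> (\<forall>x\<in>A. \<forall>y\<in>A. \<not> E x y)
                   \<and> A \<inter> I \<noteq> {} \<and> A \<inter> K \<noteq> {}}"

definition J0fam :: "'a set \<Rightarrow> 'a set \<Rightarrow> ('a \<Rightarrow> 'a \<Rightarrow> bool) \<Rightarrow> 'a set set" where
  "J0fam I K E = insert {} (Jfam I K E)"

definition states_of :: "'a set \<Rightarrow> 'a set \<Rightarrow> ('a \<Rightarrow> 'a \<Rightarrow> bool) \<Rightarrow> 'a set
    \<Rightarrow> ('a list \<times> 'a list) set" where
  "states_of I K E A = {(c, d) \<in> states I K E. set c = A \<inter> I \<and> set d = A \<inter> K}"

definition pi_set :: "'a set \<Rightarrow> 'a set \<Rightarrow> ('a \<Rightarrow> 'a \<Rightarrow> bool) \<Rightarrow> ('a \<Rightarrow> real) \<Rightarrow> ('a \<Rightarrow> real)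
    \<Rightarrow> 'a set \<Rightarrow> real" where
  "pi_set I K E lam mu A = (if A \<in> J0fam I K E
      then (\<Sum>\<^sub>\<infinity> s\<in>states_of I K E A. pi_st I K E lam mu s) else 0)"

definition ell_I :: "'a set \<Rightarrow> 'a set \<Rightarrow> ('a \<Rightarrow> 'a \<Rightarrow> bool) \<Rightarrow> ('a \<Rightarrow> real) \<Rightarrow> ('a \<Rightarrow> real)
    \<Rightarrow> 'a set \<Rightarrow> real" where
  "ell_I I K E lam mu A = (if A \<in> J0fam I K E
      then (\<Sum>\<^sub>\<infinity> s\<in>states_of I K E A. real (length (fst s)) * pi_st I K E lam mu s) else 0)"

definition L_I :: "'a set \<Rightarrow> 'a set \<Rightarrow> ('a \<Rightarrow> 'a \<Rightarrow> bool) \<Rightarrow> ('a \<Rightarrow> real) \<Rightarrow> ('a \<Rightarrow> real) \<Rightarrow> real" where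
  "L_I I K E lam mu = (\<Sum>\<^sub>\<infinity> s\<in>states I K E. real (length (fst s)) * pi_st I K E lam mu s)"

definition Delta :: "'a set \<Rightarrow> 'a set \<Rightarrow> ('a \<Rightarrow> 'a \<Rightarrow> bool) \<Rightarrow> ('a \<Rightarrow> real) \<Rightarrow> ('a \<Rightarrow> real)
    \<Rightarrow> 'a set \<Rightarrow> real" where
  "Delta I K E lam mu A =
     sum mu (Kof E K (A \<inter> I)) * sum lam (Iof E I (A \<inter> K)) - sum lam (A \<inter> I) * sum mu (A \<inter> K)"

end

theory Submission
  imports Defs
begin

(* The weight pi factorises into a product over the prefixes of the customer word and one
   over the prefixes of the server word, so the total weight of the states with class set A
   and n unmatched customers is F_n(A \<inter> I) G_n(A \<inter> K), where F_n(B) sums the customer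
   prefix products over the words of length n with letter set B.  Removing the last letter
   gives mu(K(B)) F_(n+1)(B) = lam(B) F_n(B) + sum_(i in B) lam_i F_n(B - {i}), and dually for
   G_n.  Multiplying the two recurrences, the slice weights x_n of A satisfy
   D x_(n+1) = rho x_n + R_n with D = mu(K(A \<inter> I)) lam(I(A \<inter> K)), rho = lam(A \<inter> I) mu(A \<inter> K),
   and R_n a combination of slice weights of proper subsets of A.  Stability gives rho < D,
   so by induction on A both x_n and n x_n are summable, and summing (n + 1) times the
   recurrence over n yields
   Delta(A) ell(A) = D pi(A) + R(ell), which is the claimed identity after normalisation. *)

definition lists_with_set :: "nat \<Rightarrow> 'a set \<Rightarrow> 'a list set" where
  "lists_with_set n B = {c. length c = n \<and> set c = B}"

definition prefix_weight :: "('a \<Rightarrow> real) \<Rightarrow> ('a set \<Rightarrow> real) \<Rightarrow> 'a list \<Rightarrow> real" where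
  "prefix_weight w h c = (\<Prod>p<length c. w (c ! p) / h (set (take (Suc p) c)))"

definition prefix_weight_sum :: "('a \<Rightarrow> real) \<Rightarrow> ('a set \<Rightarrow> real) \<Rightarrow> nat \<Rightarrow> 'a set \<Rightarrow> real" where
  "prefix_weight_sum w h n B = sum (prefix_weight w h) (lists_with_set n B)"

lemma finite_lists_with_set: "finite B \<Longrightarrow> finite (lists_with_set n B)"
  unfolding lists_with_set_def
  by (rule finite_subset[OF _ finite_lists_length_eq[of B n]]) auto

lemma lists_with_set_0: "lists_with_set 0 B = (if B = {} then {[]} else {})"
  by (auto simp: lists_with_set_def)

lemma lists_with_set_Suc:
  "lists_with_set (Suc n) B =
     (\<lambda>(x, c). c @ [x]) ` (SIGMA x:B. lists_with_set n B \<union> lists_with_set n (B - {x}))"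
proof (intro set_eqI iffI)
  fix c assume c: "c \<in> lists_with_set (Suc n) B"
  then obtain c0 x where c0: "c = c0 @ [x]"
    by (cases c rule: rev_cases) (auto simp: lists_with_set_def)
  moreover have "insert x (set c0) = B" "length c0 = n"
    using c c0 by (auto simp: lists_with_set_def)
  then have "x \<in> B" "c0 \<in> lists_with_set n B \<union> lists_with_set n (B - {x})"
    by (auto simp: lists_with_set_def)
  ultimately show "c \<in> (\<lambda>(x, c). c @ [x]) ` (SIGMA x:B. lists_with_set n B \<union> lists_with_set n (B - {x}))"
    by (intro image_eqI[of _ _ "(x, c0)"]) auto
next
  fix c assume "c \<in> (\<lambda>(x, c). c @ [x]) ` (SIGMA x:B. lists_with_set n B \<union> lists_with_set n (B - {x}))"
  then obtain x c0 where "c = c0 @ [x]" "x \<in> B" "c0 \<in> lists_with_set n B \<union> lists_with_set n (B - {x})"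
    by auto
  then show "c \<in> lists_with_set (Suc n) B"
    by (auto simp: lists_with_set_def)
qed

lemma prefix_weight_snoc:
  "prefix_weight w h (c @ [x]) = prefix_weight w h c * (w x / h (insert x (set c)))"
proof -
  have "prefix_weight w h (c @ [x]) =
      (\<Prod>p<length c. w ((c @ [x]) ! p) / h (set (take (Suc p) (c @ [x])))) * (w x / h (insert x (set c)))"
    by (simp add: prefix_weight_def nth_append)
  also have "(\<Prod>p<length c. w ((c @ [x]) ! p) / h (set (take (Suc p) (c @ [x])))) = prefix_weight w h c"
    unfolding prefix_weight_def by (rule prod.cong) (auto simp: nth_append)
  finally show ?thesis .
qed

lemma prefix_weight_nonneg:
  assumes "\<And>x. x \<in> set c \<Longrightarrow> 0 \<le> w x" "\<And>S. 0 \<le> h S"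
  shows "0 \<le> prefix_weight w h c"
  unfolding prefix_weight_def using assms by (intro prod_nonneg divide_nonneg_nonneg) auto

lemma prefix_weight_sum_nonneg:
  assumes "\<And>x. x \<in> B \<Longrightarrow> 0 \<le> w x" "\<And>S. 0 \<le> h S"
  shows "0 \<le> prefix_weight_sum w h n B"
  unfolding prefix_weight_sum_def
proof (intro sum_nonneg prefix_weight_nonneg)
  fix c x assume "c \<in> lists_with_set n B" "x \<in> set c"
  then show "0 \<le> w x" using assms(1) by (simp add: lists_with_set_def)
qed (rule assms(2))

lemma prefix_weight_sum_0: "prefix_weight_sum w h 0 B = (if B = {} then 1 else 0)"
  by (simp add: prefix_weight_sum_def lists_with_set_0 prefix_weight_def)

lemma prefix_weight_sum_Suc:
  assumes "finite B"
  shows "prefix_weight_sum w h (Suc n) B =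
    (\<Sum>x\<in>B. w x / h B * (prefix_weight_sum w h n B + prefix_weight_sum w h n (B - {x})))"
proof -
  have inj: "inj_on (\<lambda>(x, c). c @ [x]) (SIGMA x:B. lists_with_set n B \<union> lists_with_set n (B - {x}))"
    by (auto simp: inj_on_def)
  have "prefix_weight_sum w h (Suc n) B =
      (\<Sum>(x, c)\<in>(SIGMA x:B. lists_with_set n B \<union> lists_with_set n (B - {x})). prefix_weight w h (c @ [x]))"
    unfolding prefix_weight_sum_def lists_with_set_Suc sum.reindex[OF inj] by (simp add: case_prod_unfold)
  also have "\<dots> = (\<Sum>x\<in>B. \<Sum>c\<in>lists_with_set n B \<union> lists_with_set n (B - {x}). prefix_weight w h (c @ [x]))"
    using assms by (intro sum.Sigma[symmetric]) (auto simp: finite_lists_with_set)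
  also have "\<dots> = (\<Sum>x\<in>B. \<Sum>c\<in>lists_with_set n B \<union> lists_with_set n (B - {x}). w x / h B * prefix_weight w h c)"
  proof (intro sum.cong refl)
    fix x c assume "x \<in> B" "c \<in> lists_with_set n B \<union> lists_with_set n (B - {x})"
    then have "insert x (set c) = B" by (auto simp: lists_with_set_def)
    then show "prefix_weight w h (c @ [x]) = w x / h B * prefix_weight w h c"
      by (simp add: prefix_weight_snoc)
  qed
  also have "\<dots> = (\<Sum>x\<in>B. w x / h B * (prefix_weight_sum w h n B + prefix_weight_sum w h n (B - {x})))"
  proof (intro sum.cong refl)
    fix x assume "x \<in> B"
    then have "lists_with_set n B \<inter> lists_with_set n (B - {x}) = {}"
      by (auto simp: lists_with_set_def)
    moreover have "finite (lists_with_set n B)" "finite (lists_with_set n (B - {x}))"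
      using assms by (simp_all add: finite_lists_with_set)
    ultimately show "(\<Sum>c\<in>lists_with_set n B \<union> lists_with_set n (B - {x}). w x / h B * prefix_weight w h c) =
        w x / h B * (prefix_weight_sum w h n B + prefix_weight_sum w h n (B - {x}))"
      unfolding sum_distrib_left[symmetric] prefix_weight_sum_def by (simp add: sum.union_disjoint)
  qed
  finally show ?thesis .
qed

lemma prefix_weight_sum_Suc_mult:
  assumes "finite B" "h B \<noteq> 0"
  shows "h B * prefix_weight_sum w h (Suc n) B =
    sum w B * prefix_weight_sum w h n B + (\<Sum>x\<in>B. w x * prefix_weight_sum w h n (B - {x}))"
  using assms by (simp add: prefix_weight_sum_Suc sum_distrib_left sum_distrib_right sum.distrib distrib_left)

lemma Diff_insert_psubset: "x \<in> A \<Longrightarrow> A - insert x Y \<subset> A"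
  by auto

lemma linear_recurrence_sums:
  fixes x R :: "nat \<Rightarrow> real"
  assumes x_nonneg: "\<And>n. 0 \<le> x n" and R_nonneg: "\<And>n. 0 \<le> R n" and x_0: "x 0 = 0"
    and rec: "\<And>n. D * x (Suc n) = \<rho> * x n + R n"
    and \<rho>: "0 \<le> \<rho>" "\<rho> < D" and R_sums: "R sums r"
  shows "x sums (r / (D - \<rho>))"
proof -
  have partial_sums_le: "(\<Sum>i<N. x i) \<le> r / (D - \<rho>)" for N
  proof (cases N)
    case 0
    then show ?thesis using \<rho> sums_le[OF R_nonneg sums_zero R_sums] by simp
  next
    case (Suc M)
    have shift: "(\<Sum>i<Suc M. x i) = (\<Sum>i<M. x (Suc i))"
      by (subst sum.lessThan_Suc_shift) (simp add: x_0)
    have "D * (\<Sum>i<M. x (Suc i)) = \<rho> * (\<Sum>i<M. x i) + (\<Sum>i<M. R i)"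
      by (simp add: sum_distrib_left rec sum.distrib)
    also have "\<dots> \<le> \<rho> * (\<Sum>i<M. x (Suc i)) + r"
    proof (rule add_mono)
      have "(\<Sum>i<M. x i) \<le> (\<Sum>i<Suc M. x i)" using x_nonneg by simp
      then show "\<rho> * (\<Sum>i<M. x i) \<le> \<rho> * (\<Sum>i<M. x (Suc i))"
        using shift \<rho> by (simp add: mult_left_mono)
      show "(\<Sum>i<M. R i) \<le> r"
        using R_sums R_nonneg by (auto simp: sums_iff intro!: sum_le_suminf)
    qed
    finally have "(D - \<rho>) * (\<Sum>i<M. x (Suc i)) \<le> r" by (simp add: algebra_simps)
    then show ?thesis using Suc shift \<rho> by (simp add: pos_le_divide_eq mult.commute)
  qed
  have "summable x" by (rule summableI_nonneg_bounded[OF x_nonneg partial_sums_le])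
  then have "x sums suminf x" and "(\<lambda>n. x (Suc n)) sums suminf x"
    using sums_Suc_iff[of x] x_0 by (auto simp: summable_sums)
  then have "(\<lambda>n. D * x (Suc n)) sums (D * suminf x)" and "(\<lambda>n. \<rho> * x n + R n) sums (\<rho> * suminf x + r)"
    using R_sums by (auto intro: sums_mult sums_add)
  then have "D * suminf x = \<rho> * suminf x + r" using rec sums_unique2 by auto
  then have "suminf x = r / (D - \<rho>)" using \<rho> by (simp add: field_simps)
  with \<open>x sums suminf x\<close> show ?thesis by simp
qed

lemma linear_recurrence_moment_sums:
  fixes x R :: "nat \<Rightarrow> real"
  assumes x_nonneg: "\<And>n. 0 \<le> x n" and R_nonneg: "\<And>n. 0 \<le> R n" and x_0: "x 0 = 0"
    and rec: "\<And>n. D * x (Suc n) = \<rho> * x n + R n"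
    and \<rho>: "0 \<le> \<rho>" "\<rho> < D" and R_sums: "R sums r" and nR_sums: "(\<lambda>n. real n * R n) sums r'"
  shows "(\<lambda>n. real n * x n) sums ((D * suminf x + r') / (D - \<rho>))"
proof -
  define p where "p = suminf x"
  have "x sums (r / (D - \<rho>))"
    by (rule linear_recurrence_sums[OF x_nonneg R_nonneg x_0 rec \<rho> R_sums])
  then have "x sums p" "p = r / (D - \<rho>)" by (auto simp: p_def sums_iff)
  \<comment> \<open>multiplying the recurrence by n + 1 gives a recurrence of the same shape for n x_n\<close>
  have "(\<lambda>n. real n * x n) sums ((\<rho> * p + (r' + r)) / (D - \<rho>))"
  proof (rule linear_recurrence_sums)
    show "D * (real (Suc n) * x (Suc n)) = \<rho> * (real n * x n) + (\<rho> * x n + (real n * R n + R n))" for n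
      using arg_cong[OF rec[of n], of "\<lambda>t. real (Suc n) * t"] by (simp add: algebra_simps)
    show "(\<lambda>n. \<rho> * x n + (real n * R n + R n)) sums (\<rho> * p + (r' + r))"
      using \<open>x sums p\<close> nR_sums R_sums by (intro sums_add sums_mult)
  qed (use x_nonneg R_nonneg \<rho> in auto)
  moreover have "\<rho> * p + (r' + r) = D * p + r'" using \<open>p = r / (D - \<rho>)\<close> \<rho> by (simp add: field_simps)
  ultimately show ?thesis unfolding p_def by metis
qed

lemma has_sum_UN_finite_slices:
  fixes g :: "'b \<Rightarrow> real"
  assumes g_nonneg: "\<And>x. x \<in> (\<Union>n. T n) \<Longrightarrow> 0 \<le> g x" and fin: "\<And>n. finite (T n)"
    and disj: "disjoint_family T" and slices_sums: "(\<lambda>n. sum g (T n)) sums s"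
  shows "(g has_sum s) (\<Union>n. T n)"
proof -
  have slices: "((\<lambda>n. sum g (T n)) has_sum s) UNIV"
    using slices_sums g_nonneg by (intro sums_nonneg_imp_has_sum sum_nonneg) auto
  have slice: "((\<lambda>y. (g \<circ> snd) (n, y)) has_sum sum g (T n)) (T n)" for n
    using fin by simp
  have "((g \<circ> snd) has_sum s) (Sigma UNIV T)"
  proof (rule has_sum_SigmaI[OF slice slices])
    show "(g \<circ> snd) summable_on Sigma UNIV T"
      using slice slices g_nonneg by (intro summable_on_SigmaI) (auto dest: has_sum_imp_summable)
  qed
  moreover have "inj_on snd (Sigma UNIV T)"
    using disj by (auto simp: disjoint_family_on_def inj_on_def)
  moreover have "snd ` Sigma UNIV T = (\<Union>n. T n)" by force
  ultimately show ?thesis by (metis has_sum_reindex)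
qed

locale matching_model =
  fixes I K :: "'a set" and E :: "'a \<Rightarrow> 'a \<Rightarrow> bool" and lam mu :: "'a \<Rightarrow> real"
  assumes finI: "finite I" and finK: "finite K"
    and neI: "I \<noteq> {}" and neK: "K \<noteq> {}" and disj: "I \<inter> K = {}"
    and bip: "\<And>x y. E x y \<Longrightarrow> x \<in> I \<and> y \<in> K"
    and conn: "\<And>x y. x \<in> I \<union> K \<Longrightarrow> y \<in> I \<union> K \<Longrightarrow> (\<lambda>u v. E u v \<or> E v u)\<^sup>*\<^sup>* x y"
    and lam_pos: "\<And>i. i \<in> I \<Longrightarrow> lam i > 0" and mu_pos: "\<And>k. k \<in> K \<Longrightarrow> mu k > 0"
    and lam_sum: "sum lam I = 1" and mu_sum: "sum mu K = 1"
    and stab: "\<And>A. A \<noteq> {} \<Longrightarrow> A \<subset> I \<Longrightarrow> sum lam A < sum mu (Kof E K A)"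
begin

abbreviation mu_nbr :: "'a set \<Rightarrow> real" where
  "mu_nbr \<equiv> \<lambda>S. sum mu (Kof E K S)"

abbreviation lam_nbr :: "'a set \<Rightarrow> real" where
  "lam_nbr \<equiv> \<lambda>S. sum lam (Iof E I S)"

definition indep :: "'a set \<Rightarrow> bool" where
  "indep A \<longleftrightarrow> A \<subseteq> I \<union> K \<and> (\<forall>x\<in>A. \<forall>y\<in>A. \<not> E x y)"

lemma has_neighbour:
  assumes x: "x \<in> I \<union> K"
  shows "\<exists>y. E x y \<or> E y x"
proof -
  obtain y where y: "y \<in> I \<union> K" "y \<noteq> x"
    using x neI neK disj by blast
  from conn[OF x y(1)] show ?thesis
    using y(2) by (cases rule: converse_rtranclpE) auto
qed

lemma customer_has_neighbour: "i \<in> I \<Longrightarrow> \<exists>k\<in>K. E i k"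
  using has_neighbour[of i] bip disj by blast

lemma server_has_neighbour: "k \<in> K \<Longrightarrow> \<exists>i\<in>I. E i k"
  using has_neighbour[of k] bip disj by blast

lemma mu_nbr_nonneg: "0 \<le> mu_nbr S"
  using mu_pos by (intro sum_nonneg) (auto simp: Kof_def less_imp_le)

lemma lam_nbr_nonneg: "0 \<le> lam_nbr S"
  using lam_pos by (intro sum_nonneg) (auto simp: Iof_def less_imp_le)

lemma mu_nbr_pos:
  assumes "B \<subseteq> I" "B \<noteq> {}"
  shows "0 < mu_nbr B"
proof -
  obtain i k where "i \<in> B" "k \<in> K" "E i k"
    using assms customer_has_neighbour by blast
  then have "k \<in> Kof E K B" by (auto simp: Kof_def)
  then show ?thesis
    using finK mu_pos by (intro sum_pos2[of _ k]) (auto simp: Kof_def less_imp_le)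
qed

lemma lam_nbr_pos:
  assumes "C \<subseteq> K" "C \<noteq> {}"
  shows "0 < lam_nbr C"
proof -
  obtain i k where "k \<in> C" "i \<in> I" "E i k"
    using assms server_has_neighbour by blast
  then have "i \<in> Iof E I C" by (auto simp: Iof_def)
  then show ?thesis
    using finI lam_pos by (intro sum_pos2[of _ i]) (auto simp: Iof_def less_imp_le)
qed

lemma stab_servers:
  assumes C: "C \<noteq> {}" "C \<subset> K"
  shows "sum mu C < lam_nbr C"
proof -
  \<comment> \<open>the customer classes with no neighbour in C can only be served outside C\<close>
  define B where "B = I - Iof E I C"
  have "Kof E K B \<subseteq> K - C"
    by (auto simp: Kof_def B_def Iof_def dest: bip)
  then have nbr_le: "mu_nbr B \<le> sum mu (K - C)"
    using finK mu_pos by (intro sum_mono2) (auto simp: less_imp_le)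
  have lam_B: "sum lam B = 1 - lam_nbr C"
    using finI lam_sum by (simp add: B_def sum_diff Iof_def)
  have mu_rest: "sum mu (K - C) = 1 - sum mu C"
    using C finK mu_sum by (simp add: sum_diff)
  show ?thesis
  proof (cases "B = {}")
    case True
    obtain k where "k \<in> K - C" using C by auto
    then have "0 < sum mu (K - C)"
      using finK mu_pos by (intro sum_pos2[of _ k]) (auto simp: less_imp_le)
    then show ?thesis using True lam_B mu_rest by simp
  next
    case False
    obtain i k where "k \<in> C" "i \<in> I" "E i k"
      using C server_has_neighbour by blast
    then have "B \<subset> I" by (auto simp: B_def Iof_def)
    then have "sum lam B < mu_nbr B" using stab False by blast
    then show ?thesis using nbr_le lam_B mu_rest by linarith
  qed
qed

lemma Jfam_iff: "A \<in> Jfam I K E \<longleftrightarrow> indep A \<and> A \<inter> I \<noteq> {} \<and> A \<inter> K \<noteq> {}"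
  by (auto simp: Jfam_def indep_def)

lemma J0fam_iff: "indep A \<Longrightarrow> A \<in> J0fam I K E \<longleftrightarrow> A = {} \<or> (A \<inter> I \<noteq> {} \<and> A \<inter> K \<noteq> {})"
  by (auto simp: J0fam_def Jfam_iff)

lemma indep_subset: "indep A \<Longrightarrow> B \<subseteq> A \<Longrightarrow> indep B"
  by (auto simp: indep_def)

lemma indep_if_J0fam: "A \<in> J0fam I K E \<Longrightarrow> indep A"
  by (auto simp: J0fam_def Jfam_iff indep_def)

lemma Delta_pos:
  assumes A: "A \<in> Jfam I K E"
  shows "sum lam (A \<inter> I) * sum mu (A \<inter> K) < mu_nbr (A \<inter> I) * lam_nbr (A \<inter> K)"
proof -
  have ind: "indep A" and AI: "A \<inter> I \<noteq> {}" and AK: "A \<inter> K \<noteq> {}"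
    using A Jfam_iff by auto
  obtain i k where "i \<in> A \<inter> I" "k \<in> K" "E i k"
    using AI customer_has_neighbour by blast
  then have "A \<inter> K \<subset> K" using ind by (auto simp: indep_def)
  then have "sum mu (A \<inter> K) < lam_nbr (A \<inter> K)" by (rule stab_servers[OF AK])
  obtain i' k' where "k' \<in> A \<inter> K" "i' \<in> I" "E i' k'"
    using AK server_has_neighbour by blast
  then have "A \<inter> I \<subset> I" using ind by (auto simp: indep_def)
  then have "sum lam (A \<inter> I) < mu_nbr (A \<inter> I)" by (rule stab[OF AI])
  moreover have "0 < sum lam (A \<inter> I)" "0 < sum mu (A \<inter> K)"
    using AI AK finI finK lam_pos mu_pos by (auto intro: sum_pos)
  ultimately show ?thesis
    using \<open>sum mu (A \<inter> K) < lam_nbr (A \<inter> K)\<close> by (intro mult_strict_mono) auto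
qed

definition slice_weight :: "nat \<Rightarrow> 'a set \<Rightarrow> real" where
  "slice_weight n A = prefix_weight_sum lam mu_nbr n (A \<inter> I) * prefix_weight_sum mu lam_nbr n (A \<inter> K)"

definition removal_sum :: "'a set \<Rightarrow> ('a set \<Rightarrow> real) \<Rightarrow> real" where
  "removal_sum A g = sum mu (A \<inter> K) * (\<Sum>i\<in>A \<inter> I. lam i * g (A - {i}))
     + sum lam (A \<inter> I) * (\<Sum>k\<in>A \<inter> K. mu k * g (A - {k}))
     + (\<Sum>i\<in>A \<inter> I. \<Sum>k\<in>A \<inter> K. lam i * mu k * g (A - {i, k}))"

lemma slice_weight_nonneg: "0 \<le> slice_weight n A"
  unfolding slice_weight_def using lam_pos mu_pos mu_nbr_nonneg lam_nbr_nonneg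
  by (intro mult_nonneg_nonneg prefix_weight_sum_nonneg) (auto simp: less_imp_le)

lemma slice_weight_0: "A \<noteq> {} \<Longrightarrow> A \<subseteq> I \<union> K \<Longrightarrow> slice_weight 0 A = 0"
  by (auto simp: slice_weight_def prefix_weight_sum_0)

lemma slice_weight_Suc_eq_0: "A \<inter> I = {} \<or> A \<inter> K = {} \<Longrightarrow> slice_weight (Suc n) A = 0"
  by (auto simp: slice_weight_def prefix_weight_sum_Suc)

lemma slice_weight_Suc:
  assumes A: "A \<in> Jfam I K E"
  shows "mu_nbr (A \<inter> I) * lam_nbr (A \<inter> K) * slice_weight (Suc n) A
       = sum lam (A \<inter> I) * sum mu (A \<inter> K) * slice_weight n A + removal_sum A (slice_weight n)"
proof -
  define B C where "B = A \<inter> I" and "C = A \<inter> K"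
  define F G where "F = prefix_weight_sum lam mu_nbr n" and "G = prefix_weight_sum mu lam_nbr n"
  define F' G' where "F' = (\<Sum>i\<in>B. lam i * F (B - {i}))" and "G' = (\<Sum>k\<in>C. mu k * G (C - {k}))"
  have "B \<noteq> {}" "C \<noteq> {}" using A by (auto simp: B_def C_def Jfam_iff)
  then have F_Suc: "mu_nbr B * prefix_weight_sum lam mu_nbr (Suc n) B = sum lam B * F B + F'"
    and G_Suc: "lam_nbr C * prefix_weight_sum mu lam_nbr (Suc n) C = sum mu C * G C + G'"
    using finI finK mu_nbr_pos[of B] lam_nbr_pos[of C]
    by (auto simp: B_def C_def F_def G_def F'_def G'_def intro!: prefix_weight_sum_Suc_mult)
  have slice_Diff: "slice_weight n (A - X) = F (B - X) * G (C - X)" for X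
  proof -
    have "(A - X) \<inter> I = B - X" "(A - X) \<inter> K = C - X" by (auto simp: B_def C_def)
    then show ?thesis by (simp add: slice_weight_def F_def G_def)
  qed
  have C_Diff: "C - {i} = C" if "i \<in> B" for i
    using that disj by (auto simp: B_def C_def)
  have B_Diff: "B - {k} = B" if "k \<in> C" for k
    using that disj by (auto simp: B_def C_def)
  have BC_Diff: "B - {i, k} = B - {i}" "C - {i, k} = C - {k}" if "i \<in> B" "k \<in> C" for i k
    using that disj by (auto simp: B_def C_def)
  have "(\<Sum>i\<in>B. lam i * slice_weight n (A - {i})) = F' * G C"
    unfolding slice_Diff F'_def sum_distrib_right
    by (intro sum.cong refl) (simp add: C_Diff)
  moreover have "(\<Sum>k\<in>C. mu k * slice_weight n (A - {k})) = F B * G'"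
    unfolding slice_Diff G'_def sum_distrib_left
    by (intro sum.cong refl) (simp add: B_Diff)
  moreover have "(\<Sum>i\<in>B. \<Sum>k\<in>C. lam i * mu k * slice_weight n (A - {i, k})) = F' * G'"
    unfolding slice_Diff F'_def G'_def sum_product
    by (intro sum.cong refl) (simp add: BC_Diff)
  ultimately have "removal_sum A (slice_weight n) = sum mu C * (F' * G C) + sum lam B * (F B * G') + F' * G'"
    by (simp add: removal_sum_def B_def C_def)
  moreover have "slice_weight (Suc n) A * (mu_nbr B * lam_nbr C) =
      (mu_nbr B * prefix_weight_sum lam mu_nbr (Suc n) B) * (lam_nbr C * prefix_weight_sum mu lam_nbr (Suc n) C)"
    by (simp add: slice_weight_def B_def C_def)
  ultimately show ?thesis
    unfolding F_Suc G_Suc by (simp add: slice_weight_def F_def G_def B_def C_def algebra_simps)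
qed

lemma removal_sum_nonneg:
  assumes "\<And>S. S \<subset> A \<Longrightarrow> 0 \<le> g S"
  shows "0 \<le> removal_sum A g"
  unfolding removal_sum_def using lam_pos mu_pos assms
  by (intro add_nonneg_nonneg mult_nonneg_nonneg sum_nonneg)
    (auto simp: less_imp_le intro!: assms Diff_insert_psubset)

lemma removal_sum_cong:
  assumes "\<And>S. S \<subset> A \<Longrightarrow> g S = g' S"
  shows "removal_sum A g = removal_sum A g'"
  unfolding removal_sum_def using assms
  by (intro arg_cong2[where f = "(+)"] arg_cong2[where f = "(*)"] sum.cong refl)
    (auto intro!: assms Diff_insert_psubset)

lemma removal_sum_mult: "c * removal_sum A g = removal_sum A (\<lambda>S. c * g S)"
  unfolding removal_sum_def by (simp add: algebra_simps sum_distrib_left)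

lemma removal_sum_sums:
  assumes "\<And>S. S \<subset> A \<Longrightarrow> (\<lambda>n. f n S) sums g S"
  shows "(\<lambda>n. removal_sum A (f n)) sums removal_sum A g"
  unfolding removal_sum_def using assms
  by (intro sums_add sums_mult sums_sum) (auto intro!: assms Diff_insert_psubset)

definition pi_un_set :: "'a set \<Rightarrow> real" where
  "pi_un_set A = (\<Sum>n. slice_weight n A)"

definition ell_un :: "'a set \<Rightarrow> real" where
  "ell_un A = (\<Sum>n. real n * slice_weight n A)"

lemma slice_weight_sums_step:
  assumes A: "A \<in> Jfam I K E"
    and IH: "\<And>S. S \<subset> A \<Longrightarrow> summable (\<lambda>n. slice_weight n S) \<and> summable (\<lambda>n. real n * slice_weight n S)"
  shows "summable (\<lambda>n. slice_weight n A)"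
    and "(\<lambda>n. real n * slice_weight n A) sums
           ((mu_nbr (A \<inter> I) * lam_nbr (A \<inter> K) * pi_un_set A + removal_sum A ell_un)
            / Delta I K E lam mu A)"
proof -
  have R_sums: "(\<lambda>n. removal_sum A (slice_weight n)) sums removal_sum A pi_un_set"
    using IH by (intro removal_sum_sums) (auto simp: pi_un_set_def summable_sums)
  have nR_sums: "(\<lambda>n. real n * removal_sum A (slice_weight n)) sums removal_sum A ell_un"
    unfolding removal_sum_mult
    using IH by (intro removal_sum_sums) (auto simp: ell_un_def summable_sums)
  have rec: "mu_nbr (A \<inter> I) * lam_nbr (A \<inter> K) * slice_weight (Suc n) A
       = sum lam (A \<inter> I) * sum mu (A \<inter> K) * slice_weight n A + removal_sum A (slice_weight n)" for n
    by (rule slice_weight_Suc[OF A])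
  have R_nonneg: "0 \<le> removal_sum A (slice_weight n)" for n
    by (intro removal_sum_nonneg slice_weight_nonneg)
  have "0 \<le> sum lam (A \<inter> I) * sum mu (A \<inter> K)"
    using lam_pos mu_pos by (intro mult_nonneg_nonneg sum_nonneg) (auto simp: less_imp_le)
  note \<rho> = this Delta_pos[OF A]
  have x_0: "slice_weight 0 A = 0"
    using A by (intro slice_weight_0) (auto simp: Jfam_def)
  show "summable (\<lambda>n. slice_weight n A)"
    using linear_recurrence_sums[OF slice_weight_nonneg R_nonneg x_0 rec \<rho> R_sums]
    by (rule sums_summable)
  show "(\<lambda>n. real n * slice_weight n A) sums
      ((mu_nbr (A \<inter> I) * lam_nbr (A \<inter> K) * pi_un_set A + removal_sum A ell_un) / Delta I K E lam mu A)"
    using linear_recurrence_moment_sums[OF slice_weight_nonneg R_nonneg x_0 rec \<rho> R_sums nR_sums]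
    unfolding Delta_def pi_un_set_def .
qed

lemma slice_weight_summable:
  assumes "indep A"
  shows "summable (\<lambda>n. slice_weight n A) \<and> summable (\<lambda>n. real n * slice_weight n A)"
proof -
  have "finite A" using assms finI finK by (auto simp: indep_def intro: finite_subset)
  then show ?thesis using assms
  proof (induction A rule: finite_psubset_induct)
    case (psubset A)
    show ?case
    proof (cases "A \<in> Jfam I K E")
      case True
      have IH: "summable (\<lambda>n. slice_weight n S) \<and> summable (\<lambda>n. real n * slice_weight n S)"
        if "S \<subset> A" for S
        using psubset.IH[OF that] indep_subset[OF psubset.prems] that by auto
      show ?thesis
        using slice_weight_sums_step[OF True IH] by (auto intro: sums_summable)
    next
      case False
      then have "slice_weight (Suc n) A = 0" for n
        using psubset.prems by (intro slice_weight_Suc_eq_0) (auto simp: Jfam_iff)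
      then show ?thesis
        using summable_iff_shift[of "\<lambda>n. slice_weight n A" 1]
          summable_iff_shift[of "\<lambda>n. real n * slice_weight n A" 1] by simp
    qed
  qed
qed

lemma ell_un_eq_0:
  assumes "A \<inter> I = {} \<or> A \<inter> K = {}"
  shows "ell_un A = 0"
proof -
  have "(\<lambda>n. real n * slice_weight n A) = (\<lambda>_. 0)"
  proof
    show "real n * slice_weight n A = 0" for n
      using slice_weight_Suc_eq_0[OF assms] by (cases n) auto
  qed
  then show ?thesis by (simp add: ell_un_def)
qed

lemma Delta_ell_un:
  assumes A: "A \<in> Jfam I K E"
  shows "Delta I K E lam mu A * ell_un A
       = mu_nbr (A \<inter> I) * lam_nbr (A \<inter> K) * pi_un_set A + removal_sum A ell_un"
proof -
  have "indep A" using A by (simp add: Jfam_iff)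
  then have "(\<lambda>n. real n * slice_weight n A) sums
      ((mu_nbr (A \<inter> I) * lam_nbr (A \<inter> K) * pi_un_set A + removal_sum A ell_un) / Delta I K E lam mu A)"
    using slice_weight_summable indep_subset by (intro slice_weight_sums_step[OF A]) auto
  moreover have "Delta I K E lam mu A \<noteq> 0" using Delta_pos[OF A] by (simp add: Delta_def)
  ultimately show ?thesis by (simp add: ell_un_def sums_iff)
qed

lemma pi_un_eq_prefix_weights:
  "length c = length d \<Longrightarrow>
    pi_un I K E lam mu (c, d) = prefix_weight lam mu_nbr c * prefix_weight mu lam_nbr d"
  by (simp only: pi_un_def prefix_weight_def prod.case prod.distrib[symmetric])

lemma pi_un_nonneg: "s \<in> states I K E \<Longrightarrow> 0 \<le> pi_un I K E lam mu s"
  using lam_pos mu_pos mu_nbr_nonneg lam_nbr_nonneg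
  by (auto simp: states_def pi_un_eq_prefix_weights less_imp_le subset_iff
      intro!: mult_nonneg_nonneg prefix_weight_nonneg)

lemma states_of_length_eq:
  assumes "indep A"
  shows "{s \<in> states_of I K E A. length (fst s) = n} =
    lists_with_set n (A \<inter> I) \<times> lists_with_set n (A \<inter> K)"
  using assms unfolding states_of_def states_def lists_with_set_def indep_def by auto

lemma sum_states_of_length_eq:
  assumes "indep A"
  shows "sum (pi_un I K E lam mu) {s \<in> states_of I K E A. length (fst s) = n} = slice_weight n A"
proof -
  have "sum (pi_un I K E lam mu) (lists_with_set n (A \<inter> I) \<times> lists_with_set n (A \<inter> K))
      = (\<Sum>c\<in>lists_with_set n (A \<inter> I). \<Sum>d\<in>lists_with_set n (A \<inter> K).
           prefix_weight lam mu_nbr c * prefix_weight mu lam_nbr d)"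
    unfolding sum.cartesian_product
    by (intro sum.cong refl) (auto simp: lists_with_set_def pi_un_eq_prefix_weights)
  then show ?thesis
    by (simp add: states_of_length_eq[OF assms] slice_weight_def prefix_weight_sum_def sum_product)
qed

lemma has_sum_states_of:
  assumes A: "indep A"
  shows "(pi_un I K E lam mu has_sum pi_un_set A) (states_of I K E A)"
    and "((\<lambda>s. real (length (fst s)) * pi_un I K E lam mu s) has_sum ell_un A) (states_of I K E A)"
proof -
  define T where "T n = {s \<in> states_of I K E A. length (fst s) = n}" for n
  have fin: "finite (T n)" for n
    using finI finK by (simp add: T_def states_of_length_eq[OF A] finite_lists_with_set)
  have disj: "disjoint_family T" by (auto simp: T_def disjoint_family_on_def)
  have UN: "states_of I K E A = (\<Union>n. T n)" by (auto simp: T_def)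
  have nonneg: "0 \<le> pi_un I K E lam mu s" if "s \<in> (\<Union>n. T n)" for s
    using that pi_un_nonneg by (auto simp: T_def states_of_def)
  have sum_T: "sum (pi_un I K E lam mu) (T n) = slice_weight n A" for n
    unfolding T_def by (rule sum_states_of_length_eq[OF A])
  have sum_length_T:
    "sum (\<lambda>s. real (length (fst s)) * pi_un I K E lam mu s) (T n) = real n * slice_weight n A" for n
    by (simp add: sum_T[symmetric] sum_distrib_left T_def)
  show "(pi_un I K E lam mu has_sum pi_un_set A) (states_of I K E A)"
    unfolding UN using nonneg fin disj slice_weight_summable[OF A]
    by (intro has_sum_UN_finite_slices) (auto simp: sum_T pi_un_set_def summable_sums)
  show "((\<lambda>s. real (length (fst s)) * pi_un I K E lam mu s) has_sum ell_un A) (states_of I K E A)"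
    unfolding UN using nonneg fin disj slice_weight_summable[OF A]
    by (intro has_sum_UN_finite_slices) (auto simp: sum_length_T ell_un_def summable_sums)
qed

(* Nothing below needs norm_const > 0 (it is the junk value 0 if pi_un were not summable):
   every claimed identity is homogeneous in 1 / norm_const. *)
abbreviation norm_const :: real where
  "norm_const \<equiv> \<Sum>\<^sub>\<infinity>t\<in>states I K E. pi_un I K E lam mu t"

lemma ell_I_eq:
  assumes "indep A"
  shows "ell_I I K E lam mu A = ell_un A / norm_const"
proof (cases "A \<in> J0fam I K E")
  case True
  have "((\<lambda>s. real (length (fst s)) * pi_st I K E lam mu s) has_sum
      ell_un A / norm_const) (states_of I K E A)"
    using has_sum_divide_const[OF has_sum_states_of(2)[OF assms]] by (simp add: pi_st_def)
  then show ?thesis using True by (simp add: ell_I_def infsumI)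
next
  case False
  then have "A \<inter> I = {} \<or> A \<inter> K = {}" using J0fam_iff[OF assms] by blast
  then show ?thesis using False by (simp add: ell_I_def ell_un_eq_0)
qed

lemma pi_set_eq:
  assumes "A \<in> Jfam I K E"
  shows "pi_set I K E lam mu A = pi_un_set A / norm_const"
proof -
  have "(pi_st I K E lam mu has_sum pi_un_set A / norm_const)
      (states_of I K E A)"
    using has_sum_divide_const[OF has_sum_states_of(1)] assms
    by (simp add: pi_st_def[abs_def] Jfam_iff)
  then show ?thesis using assms by (simp add: pi_set_def J0fam_def infsumI)
qed

lemma states_eq_UN_states_of: "states I K E = (\<Union>A\<in>J0fam I K E. states_of I K E A)"
proof (intro equalityI subsetI)
  fix s assume s: "s \<in> states I K E"
  obtain c d where cd: "s = (c, d)" by (cases s)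
  define A where "A = set c \<union> set d"
  have "set c \<subseteq> I" "set d \<subseteq> K" "length c = length d" "\<forall>p\<in>set c. \<forall>q\<in>set d. \<not> E p q"
    using s cd by (auto simp: states_def)
  moreover have "\<not> E x y" if "x \<in> A" "y \<in> A" for x y
    using that \<open>set c \<subseteq> I\<close> \<open>set d \<subseteq> K\<close> \<open>\<forall>p\<in>set c. \<forall>q\<in>set d. \<not> E p q\<close> disj bip
    unfolding A_def by blast
  ultimately have "A \<inter> I = set c" "A \<inter> K = set d" "indep A" "c = [] \<longleftrightarrow> d = []"
    using disj by (auto simp: A_def indep_def)
  then have "A \<in> J0fam I K E" "s \<in> states_of I K E A"
    using s cd by (auto simp: J0fam_iff states_of_def A_def)
  then show "s \<in> (\<Union>A\<in>J0fam I K E. states_of I K E A)" by blast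
qed (auto simp: states_of_def)

lemma has_sum_length_states:
  "((\<lambda>s. real (length (fst s)) * pi_st I K E lam mu s) has_sum (\<Sum>A\<in>J0fam I K E. ell_I I K E lam mu A))
     (states I K E)"
proof -
  have "finite (J0fam I K E)"
    using finI finK by (auto simp: J0fam_def Jfam_def intro: finite_subset[of _ "Pow (I \<union> K)"])
  moreover have "states_of I K E A \<inter> states_of I K E A' = {}"
    if "A \<in> J0fam I K E" "A' \<in> J0fam I K E" "A \<noteq> A'" for A A'
  proof -
    have "A = (A \<inter> I) \<union> (A \<inter> K)" "A' = (A' \<inter> I) \<union> (A' \<inter> K)"
      using that indep_if_J0fam by (auto simp: indep_def)
    then show ?thesis using that(3) by (auto simp: states_of_def)
  qed
  moreover have "((\<lambda>s. real (length (fst s)) * pi_st I K E lam mu s) has_sum ell_I I K E lam mu A)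
      (states_of I K E A)" if "A \<in> J0fam I K E" for A
    using has_sum_divide_const[OF has_sum_states_of(2)[OF indep_if_J0fam[OF that]]]
    by (simp add: pi_st_def ell_I_eq[OF indep_if_J0fam[OF that]])
  ultimately show ?thesis
    unfolding states_eq_UN_states_of by (intro sum_has_sum) auto
qed

lemma ell_I_empty: "ell_I I K E lam mu {} = 0"
  by (simp add: ell_I_eq indep_def ell_un_eq_0)

lemma Delta_ell_I:
  assumes A: "A \<in> Jfam I K E"
  shows "Delta I K E lam mu A * ell_I I K E lam mu A =
           mu_nbr (A \<inter> I) * lam_nbr (A \<inter> K) * pi_set I K E lam mu A
         + removal_sum A (ell_I I K E lam mu)"
proof -
  have ind: "indep A" using A by (simp add: Jfam_iff)
  have removal: "removal_sum A (ell_I I K E lam mu) = (1 / norm_const) * removal_sum A ell_un"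
    unfolding removal_sum_mult
    using ell_I_eq indep_subset[OF ind] by (intro removal_sum_cong) auto
  have "Delta I K E lam mu A * ell_I I K E lam mu A = Delta I K E lam mu A * ell_un A / norm_const"
    by (simp add: ell_I_eq[OF ind])
  also have "\<dots> = (mu_nbr (A \<inter> I) * lam_nbr (A \<inter> K) * pi_un_set A + removal_sum A ell_un) / norm_const"
    by (simp add: Delta_ell_un[OF A])
  finally show ?thesis
    by (simp add: pi_set_eq[OF A] removal add_divide_distrib)
qed

end

theorem proposition3:
  fixes I K :: "'a set" and E :: "'a \<Rightarrow> 'a \<Rightarrow> bool" and lam mu :: "'a \<Rightarrow> real"
  assumes finI: "finite I" and finK: "finite K"
    and neI: "I \<noteq> {}" and neK: "K \<noteq> {}" and disj: "I \<inter> K = {}"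
    and bip: "\<And>x y. E x y \<Longrightarrow> x \<in> I \<and> y \<in> K"
    and conn: "\<And>x y. x \<in> I \<union> K \<Longrightarrow> y \<in> I \<union> K \<Longrightarrow> (\<lambda>u v. E u v \<or> E v u)\<^sup>*\<^sup>* x y"
    and lam_pos: "\<And>i. i \<in> I \<Longrightarrow> lam i > 0" and mu_pos: "\<And>k. k \<in> K \<Longrightarrow> mu k > 0"
    and lam_sum: "sum lam I = 1" and mu_sum: "sum mu K = 1"
    and stab: "\<And>A. A \<noteq> {} \<Longrightarrow> A \<subset> I \<Longrightarrow> sum lam A < sum mu (Kof E K A)"
  shows "(\<lambda>s. real (length (fst s)) * pi_st I K E lam mu s) summable_on states I K E
    \<and> L_I I K E lam mu = (\<Sum>A\<in>J0fam I K E. ell_I I K E lam mu A)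
    \<and> ell_I I K E lam mu {} = 0
    \<and> (\<forall>A\<in>Jfam I K E.
         Delta I K E lam mu A * ell_I I K E lam mu A =
           sum mu (Kof E K (A \<inter> I)) * sum lam (Iof E I (A \<inter> K)) * pi_set I K E lam mu A
         + sum mu (A \<inter> K) * (\<Sum>i\<in>A \<inter> I. lam i * ell_I I K E lam mu (A - {i}))
         + sum lam (A \<inter> I) * (\<Sum>k\<in>A \<inter> K. mu k * ell_I I K E lam mu (A - {k}))
         + (\<Sum>i\<in>A \<inter> I. \<Sum>k\<in>A \<inter> K. lam i * mu k * ell_I I K E lam mu (A - {i, k})))"
proof -
  interpret matching_model I K E lam mu
    using assms by unfold_locales auto
  show ?thesis
    using has_sum_length_states ell_I_empty Delta_ell_I
    by (auto simp: L_I_def infsumI has_sum_imp_summable removal_sum_def add.assoc)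
qed

end
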